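(* The quotient map $\pi\colon\Pi_*\to\Pi_*/\mathbb{R}_+$ is a principal $\mathbb{R}_+$-bundle. That is, the $\mathbb{R}_+$-action on $\Pi_*$ is free, and whenever $\mathcal{P}_n\in\Pi_*$, $t_n\in\mathbb{R}_+$, $\mathcal{P}_n\to\mathcal{P}\in\Pi_*$ and $t_n\mathcal{P}_n\to t\mathcal{P}$ weakly, we have $t_n\to t$.
   Context: mm-spaces are triples $(X,d_X,\mu_X)$ with $(X,d_X)$ complete separable metric and $\mu_X$ a Borel probability measure, with $X=\operatorname{supp}\mu_X$. $\mathcal{X}$ is the set of their isomorphism classes under measure-preserving isometries of supports. Box distance: $\square(X,Y)$ is the infimum of $\varepsilon\ge0$ such that there exist Borel maps $\varphi,\psi$ from $[0,1)$ pushing Lebesgue measure to $\mu_X,\mu_Y$ and a Borel $I_0$ of measure $\ge1-\varepsilon$ with $|d_X(\varphi(s),\varphi(t))-d_Y(\psi(s),\psi(t))|\le\varepsilon$ on $I_0$. $Y\prec X$ means there is a 1-Lipschitz $f\colon X\to Y$ with $f_*\mu_X=\mu_Y$. A pyramid is a nonempty $\square$-closed subset of $\mathcal{X}$ that is downward closed under $\prec$ and such that any two elements are dominated by a common element. $\Pi$ is the set of pyramids. Weak convergence: $\mathcal{P}_n\to\mathcal{P}$ iff $\square(X,\mathcal{P}_n)\to0$ for $X\in\mathcal{P}$ and $\liminf\square(X,\mathcal{P}_n)>0$ for $X\notin\mathcal{P}$. $\mathbb{R}_+$ acts on $\Pi$ by $t\mathcal{P}=\{(X,t\,d_X,\mu_X):X\in\mathcal{P}\}$.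 $\Pi_*=\Pi\setminus\mathrm{Fix}(\Pi)$, with the quotient topology on $\Pi_*/\mathbb{R}_+$. A free action with quotient map $\pi$ is a principal $\mathbb{R}_+$-bundle if the translation function $\tau(e,e')$, defined for $\pi(e)=\pi(e')$ by $e'=\tau(e,e')e$, is continuous. *)

theory Defs
  imports "HOL-Analysis.Analysis" "HOL-Probability.Probability"
begin

text \<open>An mm-space is represented concretely as a pair (d, mu) where the carrier
  X = space mu is a subset of the fixed type real (every complete separable metric
  space has cardinality at most the continuum, so every mm-space has such a
  representative). Isomorphism classes are not formed explicitly: all notions
  below (box distance, Lipschitz domination, pyramids) are invariant under
  mm-isomorphism, and pyramids are automatically closed under isomorphism.\<close>

type_synonym mm = "(real \<Rightarrow> real \<Rightarrow> real) \<times> real measure"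

definition mm_dist :: "mm \<Rightarrow> real \<Rightarrow> real \<Rightarrow> real" where
  "mm_dist X = fst X"

definition mm_meas :: "mm \<Rightarrow> real measure" where
  "mm_meas X = snd X"

definition mm_carrier :: "mm \<Rightarrow> real set" where
  "mm_carrier X = space (snd X)"

definition metric_borel :: "real set \<Rightarrow> (real \<Rightarrow> real \<Rightarrow> real) \<Rightarrow> real set set" where
  "metric_borel M d = sigma_sets M {U. openin (Metric_space.mtopology M d) U}"

definition is_mm :: "mm \<Rightarrow> bool" where
  "is_mm X \<longleftrightarrow>
     (let M = mm_carrier X; d = mm_dist X; \<mu> = mm_meas X in
        Metric_space M d \<and>
        Metric_space.mcomplete M d \<and>
        separable_space (Metric_space.mtopology M d) \<and>
        prob_space \<mu> \<and>
        sets \<mu> = metric_borel M d \<and>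
        \<comment> \<open>X = supp mu: every open ball has positive measure\<close>
        (\<forall>x\<in>M. \<forall>r>0. measure \<mu> (Metric_space.mball M d x r) > 0))"

definition unit_leb :: "real measure" where
  "unit_leb = restrict_space lborel {0..<1}"

definition parametrization :: "(real \<Rightarrow> real) \<Rightarrow> mm \<Rightarrow> bool" where
  "parametrization \<phi> X \<longleftrightarrow>
     \<phi> \<in> measurable unit_leb (mm_meas X) \<and> distr unit_leb (mm_meas X) \<phi> = mm_meas X"

definition box :: "mm \<Rightarrow> mm \<Rightarrow> real" where
  "box X Y = Inf {\<epsilon>. \<epsilon> \<ge> 0 \<and>
     (\<exists>\<phi> \<psi> I0. parametrization \<phi> X \<and> parametrization \<psi> Y \<and>
        I0 \<in> sets lborel \<and> I0 \<subseteq> {0..<1} \<and> measure lborel I0 \<ge> 1 - \<epsilon> \<and>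
        (\<forall>s\<in>I0. \<forall>t\<in>I0.
           \<bar>mm_dist X (\<phi> s) (\<phi> t) - mm_dist Y (\<psi> s) (\<psi> t)\<bar> \<le> \<epsilon>))}"

definition box_set :: "mm \<Rightarrow> mm set \<Rightarrow> real" where
  "box_set X P = Inf (box X ` P)"

definition dominated :: "mm \<Rightarrow> mm \<Rightarrow> bool" where
  "dominated Y X \<longleftrightarrow>
     (\<exists>f. f \<in> mm_carrier X \<rightarrow> mm_carrier Y \<and>
        (\<forall>x\<in>mm_carrier X. \<forall>x'\<in>mm_carrier X.
            mm_dist Y (f x) (f x') \<le> mm_dist X x x') \<and>
        f \<in> measurable (mm_meas X) (mm_meas Y) \<and>
        distr (mm_meas X) (mm_meas Y) f = mm_meas Y)"

definition pyramid :: "mm set \<Rightarrow> bool" where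
  "pyramid P \<longleftrightarrow>
     P \<noteq> {} \<and> (\<forall>X\<in>P. is_mm X) \<and>
     \<comment> \<open>closed w.r.t. the box distance\<close>
     (\<forall>X. is_mm X \<longrightarrow> (\<forall>\<epsilon>>0. \<exists>Y\<in>P. box X Y < \<epsilon>) \<longrightarrow> X \<in> P) \<and>
     \<comment> \<open>downward closed under Lipschitz domination\<close>
     (\<forall>X\<in>P. \<forall>Y. is_mm Y \<longrightarrow> dominated Y X \<longrightarrow> Y \<in> P) \<and>
     \<comment> \<open>directed\<close>
     (\<forall>X\<in>P. \<forall>Y\<in>P. \<exists>Z\<in>P. dominated X Z \<and> dominated Y Z)"

definition weak_conv :: "(nat \<Rightarrow> mm set) \<Rightarrow> mm set \<Rightarrow> bool" where
  "weak_conv Ps P \<longleftrightarrow>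
     (\<forall>X\<in>P. (\<lambda>n. box_set X (Ps n)) \<longlonglongrightarrow> 0) \<and>
     (\<forall>X. is_mm X \<longrightarrow> X \<notin> P \<longrightarrow>
        liminf (\<lambda>n. ereal (box_set X (Ps n))) > 0)"

definition scale_mm :: "real \<Rightarrow> mm \<Rightarrow> mm" where
  "scale_mm t X = ((\<lambda>x y. t * mm_dist X x y), mm_meas X)"

definition scale_pyr :: "real \<Rightarrow> mm set \<Rightarrow> mm set" where
  "scale_pyr t P = scale_mm t ` P"

text \<open>Pi_* : pyramids that are not fixed by the action of R_+ = (0, infinity).\<close>
definition Pi_star :: "mm set set" where
  "Pi_star = {P. pyramid P \<and> \<not> (\<forall>t>0. scale_pyr t P = P)}"

end

theory Submission
  imports Defs
begin

text \<open>Scaling by \<open>s \<le> 1\<close> is 1-Lipschitz, so \<open>t \<le> u\<close> gives \<open>t\<P> \<subseteq> u\<P>\<close> for a pyramid \<open>\<P>\<close>;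
  a pyramid with \<open>u\<P> \<subseteq> \<P>\<close> for one \<open>u > 1\<close> then contains \<open>r\<P>\<close> for every \<open>r > 0\<close> and is
  fixed. So on \<open>\<Pi>\<^sub>*\<close> the map \<open>t \<mapsto> t\<P>\<close> is strictly increasing, which gives freeness.
  Scaling by \<open>c\<close> multiplies box distances by at most \<open>max c 1\<close>, so an inclusion between
  scaled approximants that holds for infinitely many \<open>n\<close> passes to the weak limits. If
  \<open>t\<^sub>n \<ge> b > t\<close> infinitely often, \<open>b\<P>\<^sub>n \<subseteq> t\<^sub>n\<P>\<^sub>n\<close> yields \<open>b\<P> \<subseteq> t\<P>\<close>; if \<open>t\<^sub>n \<le> a < t\<close>
  infinitely often, \<open>t\<^sub>n\<P>\<^sub>n \<subseteq> a\<P>\<^sub>n\<close> yields \<open>t\<P> \<subseteq> a\<P>\<close>. Both contradict strict monotonicity.\<close>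

lemma scale_mm_scale_mm [simp]: "scale_mm a (scale_mm b X) = scale_mm (a * b) X"
  by (simp add: scale_mm_def mm_dist_def mm_meas_def mult.assoc)

lemma scale_mm_1 [simp]: "scale_mm 1 X = X"
  by (simp add: scale_mm_def mm_dist_def mm_meas_def)

lemma mm_meas_scale_mm [simp]: "mm_meas (scale_mm c X) = mm_meas X"
  by (simp add: scale_mm_def mm_meas_def)

lemma mm_carrier_scale_mm [simp]: "mm_carrier (scale_mm c X) = mm_carrier X"
  by (simp add: scale_mm_def mm_carrier_def mm_meas_def)

lemma mm_dist_scale_mm [simp]: "mm_dist (scale_mm c X) = (\<lambda>x y. c * mm_dist X x y)"
  by (simp add: scale_mm_def mm_dist_def)

lemma parametrization_scale_mm [simp]: "parametrization \<phi> (scale_mm c X) = parametrization \<phi> X"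
  by (simp add: parametrization_def)

locale Scaled_metric = Metric_space +
  fixes c :: real
  assumes scale_pos: "c > 0"
begin

sublocale scaled: Metric_space M "\<lambda>x y. c * d x y"
  using scale_pos by unfold_locales (auto simp: commute triangle distrib_left[symmetric])

lemma mball_scaled: "scaled.mball x r = mball x (r / c)"
  using scale_pos by (auto simp: field_simps)

lemma mtopology_scaled: "scaled.mtopology = mtopology"
  unfolding topology_eq scaled.openin_mtopology openin_mtopology mball_scaled
  by (metis divide_pos_pos mult_pos_pos nonzero_mult_div_cancel_left scale_pos less_irrefl)

lemma MCauchy_scaled: "scaled.MCauchy = MCauchy"
proof
  fix \<sigma> :: "nat \<Rightarrow> 'a"
  have "(\<forall>\<epsilon>>0. Q (\<epsilon> / c)) \<longleftrightarrow> (\<forall>\<epsilon>>0. Q \<epsilon>)" for Q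
    by (metis divide_pos_pos mult_pos_pos nonzero_mult_div_cancel_left scale_pos less_irrefl)
  from this[of "\<lambda>\<epsilon>. \<exists>N. \<forall>n\<ge>N. \<forall>n'\<ge>N. d (\<sigma> n) (\<sigma> n') < \<epsilon>"]
  show "scaled.MCauchy \<sigma> = MCauchy \<sigma>"
    using scale_pos unfolding scaled.MCauchy_def MCauchy_def
    by (simp add: mult.commute[of c] pos_less_divide_eq[symmetric])
qed

lemma mcomplete_scaled: "scaled.mcomplete \<longleftrightarrow> mcomplete"
  by (simp add: scaled.mcomplete_def mcomplete_def MCauchy_scaled mtopology_scaled)

end

lemma is_mm_Metric_space: "is_mm X \<Longrightarrow> Metric_space (mm_carrier X) (mm_dist X)"
  by (simp add: is_mm_def Let_def)

lemma is_mm_scale_mm: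
  assumes "is_mm X" "c > 0"
  shows "is_mm (scale_mm c X)"
proof -
  interpret Scaled_metric "mm_carrier X" "mm_dist X" c
    using assms is_mm_Metric_space by (simp add: Scaled_metric_def Scaled_metric_axioms_def)
  show ?thesis
    using assms(1) scaled.Metric_space_axioms
    by (simp add: is_mm_def Let_def metric_borel_def mtopology_scaled mcomplete_scaled mball_scaled scale_pos)
qed

lemma dominated_scale_mm:
  assumes "is_mm X" "0 < s" "s \<le> 1"
  shows "dominated (scale_mm s X) X"
proof -
  have "0 \<le> mm_dist X x y" for x y
    using Metric_space.nonneg[OF is_mm_Metric_space[OF assms(1)]] .
  then have "s * mm_dist X x y \<le> mm_dist X x y" for x y
    using assms by (simp add: mult_left_le_one_le)
  then show ?thesis
    unfolding dominated_def by (intro exI[of _ "\<lambda>x. x"]) simp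
qed

definition box_admissible :: "mm \<Rightarrow> mm \<Rightarrow> real set" where
  "box_admissible X Y = {\<epsilon>. \<epsilon> \<ge> 0 \<and>
     (\<exists>\<phi> \<psi> I0. parametrization \<phi> X \<and> parametrization \<psi> Y \<and>
        I0 \<in> sets lborel \<and> I0 \<subseteq> {0..<1} \<and> measure lborel I0 \<ge> 1 - \<epsilon> \<and>
        (\<forall>s\<in>I0. \<forall>t\<in>I0.
           \<bar>mm_dist X (\<phi> s) (\<phi> t) - mm_dist Y (\<psi> s) (\<psi> t)\<bar> \<le> \<epsilon>))}"

lemma box_eq_Inf_box_admissible: "box X Y = Inf (box_admissible X Y)"
  by (simp add: box_def box_admissible_def)

lemma box_admissible_empty_iff:
  "box_admissible X Y = {} \<longleftrightarrow> \<not> (\<exists>\<phi> \<psi>. parametrization \<phi> X \<and> parametrization \<psi> Y)"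
proof
  assume "box_admissible X Y = {}"
  then have "1 \<notin> box_admissible X Y" by simp
  then show "\<not> (\<exists>\<phi> \<psi>. parametrization \<phi> X \<and> parametrization \<psi> Y)"
    unfolding box_admissible_def by (auto intro!: exI[of _ "{}"])
qed (auto simp: box_admissible_def)

text \<open>Without parametrizations the box distance is the junk value \<^term>\<open>Inf {} :: real\<close>,
  which may be negative; hence the \<open>max\<close> in the scaling bounds below.\<close>
lemma box_lower_bound: "min 0 (Inf {}) \<le> box X Y"
proof (cases "box_admissible X Y = {}")
  case False
  then have "0 \<le> box X Y"
    unfolding box_eq_Inf_box_admissible by (intro cInf_greatest) (auto simp: box_admissible_def)
  then show ?thesis by simp
qed (simp add: box_eq_Inf_box_admissible)

lemma bdd_below_box_image: "bdd_below (box X ` A)"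
  by (meson bdd_belowI2 box_lower_bound)

lemma box_admissible_scale_mm:
  assumes "c > 0" "\<epsilon> \<in> box_admissible X Y"
  shows "max c 1 * \<epsilon> \<in> box_admissible (scale_mm c X) (scale_mm c Y)"
proof -
  from assms(2) obtain \<phi> \<psi> I0 where "\<epsilon> \<ge> 0" "parametrization \<phi> X" "parametrization \<psi> Y"
    "I0 \<in> sets lborel" "I0 \<subseteq> {0..<1}" and large: "measure lborel I0 \<ge> 1 - \<epsilon>"
    and close: "\<forall>s\<in>I0. \<forall>t\<in>I0. \<bar>mm_dist X (\<phi> s) (\<phi> t) - mm_dist Y (\<psi> s) (\<psi> t)\<bar> \<le> \<epsilon>"
    unfolding box_admissible_def by blast
  have le_max: "\<epsilon> \<le> max c 1 * \<epsilon>" "c * \<epsilon> \<le> max c 1 * \<epsilon>"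
    using \<open>\<epsilon> \<ge> 0\<close> mult_right_mono[of 1 "max c 1" \<epsilon>] by (simp_all add: mult_right_mono)
  have "\<bar>c * a - c * b\<bar> \<le> max c 1 * \<epsilon>" if "\<bar>a - b\<bar> \<le> \<epsilon>" for a b
  proof -
    have "\<bar>c * a - c * b\<bar> = c * \<bar>a - b\<bar>"
      using assms(1) by (simp add: right_diff_distrib[symmetric] abs_mult)
    also have "\<dots> \<le> c * \<epsilon>" using that assms(1) by (simp add: mult_left_mono)
    finally show ?thesis using le_max(2) by linarith
  qed
  with close have "\<forall>s\<in>I0. \<forall>t\<in>I0.
      \<bar>c * mm_dist X (\<phi> s) (\<phi> t) - c * mm_dist Y (\<psi> s) (\<psi> t)\<bar> \<le> max c 1 * \<epsilon>"
    by blast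
  moreover have "0 \<le> max c 1 * \<epsilon>" "measure lborel I0 \<ge> 1 - max c 1 * \<epsilon>"
    using \<open>\<epsilon> \<ge> 0\<close> large le_max(1) by linarith+
  ultimately show ?thesis
    unfolding box_admissible_def mm_dist_scale_mm parametrization_scale_mm mem_Collect_eq
    using \<open>parametrization \<phi> X\<close> \<open>parametrization \<psi> Y\<close> \<open>I0 \<in> sets lborel\<close> \<open>I0 \<subseteq> {0..<1}\<close>
    by blast
qed

lemma box_scale_mm_le:
  assumes "c > 0"
  shows "box (scale_mm c X) (scale_mm c Y) \<le> max (box X Y) (max c 1 * box X Y)"
proof (cases "box_admissible X Y = {}")
  case True
  then have "box_admissible (scale_mm c X) (scale_mm c Y) = {}"
    by (simp add: box_admissible_empty_iff)
  with True show ?thesis by (simp add: box_eq_Inf_box_admissible)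
next
  case False
  have "bdd_below (box_admissible (scale_mm c X) (scale_mm c Y))"
    by (intro bdd_belowI[of _ 0]) (auto simp: box_admissible_def)
  then have "box (scale_mm c X) (scale_mm c Y) \<le> max c 1 * \<epsilon>" if "\<epsilon> \<in> box_admissible X Y" for \<epsilon>
    unfolding box_eq_Inf_box_admissible using box_admissible_scale_mm[OF assms that]
    by (meson cInf_lower2 order_refl)
  then have "box (scale_mm c X) (scale_mm c Y) / max c 1 \<le> box X Y"
    unfolding box_eq_Inf_box_admissible[of X] using False
    by (intro cInf_greatest) (auto simp: pos_divide_le_eq mult.commute)
  then show ?thesis by (simp add: pos_divide_le_eq mult.commute)
qed

lemma box_set_scale_pyr_le:
  assumes "c > 0"
  shows "box_set (scale_mm c X) (scale_pyr c R) \<le> max (box_set X R) (max c 1 * box_set X R)"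
proof (cases "R = {}")
  case False
  define s m where "s = box_set X R" and "m = max c 1"
  have "m \<ge> 1" by (simp add: m_def)
  show ?thesis unfolding s_def[symmetric] m_def[symmetric]
  proof (rule field_le_epsilon)
    fix e :: real assume "e > 0"
    with \<open>m \<ge> 1\<close> have "Inf (box X ` R) < s + e / m"
      by (simp add: s_def box_set_def)
    with False obtain Z where "Z \<in> R" and Z: "box X Z < s + e / m"
      using cInf_lessD[of "box X ` R"] by blast
    have "box_set (scale_mm c X) (scale_pyr c R) \<le> box (scale_mm c X) (scale_mm c Z)"
      unfolding box_set_def scale_pyr_def using \<open>Z \<in> R\<close> bdd_below_box_image
      by (intro cInf_lower) auto
    also have "\<dots> \<le> max (box X Z) (m * box X Z)"
      using box_scale_mm_le[OF assms] by (simp add: m_def)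
    also have "\<dots> \<le> max (s + e / m) (m * (s + e / m))"
      using Z \<open>m \<ge> 1\<close> by (intro max.mono mult_left_mono) auto
    also have "\<dots> \<le> max s (m * s) + e"
      using \<open>m \<ge> 1\<close> \<open>e > 0\<close> divide_le_eq[of e m e]
      by (auto simp: max_def distrib_left)
    finally show "box_set (scale_mm c X) (scale_pyr c R) \<le> max s (m * s) + e" .
  qed
qed (simp add: box_set_def scale_pyr_def)

lemma box_set_antimono:
  assumes "R \<noteq> {}" "R \<subseteq> S"
  shows "box_set X S \<le> box_set X R"
  unfolding box_set_def using assms bdd_below_box_image
  by (intro cInf_superset_mono) auto

lemma scale_pyr_scale_pyr [simp]: "scale_pyr a (scale_pyr b P) = scale_pyr (a * b) P"
  by (simp add: scale_pyr_def image_image)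

lemma scale_pyr_1 [simp]: "scale_pyr 1 P = P"
  by (simp add: scale_pyr_def)

lemma pyramid_is_mm: "pyramid P \<Longrightarrow> X \<in> P \<Longrightarrow> is_mm X"
  by (simp add: pyramid_def)

lemma is_mm_scale_pyr: "pyramid P \<Longrightarrow> c > 0 \<Longrightarrow> X \<in> scale_pyr c P \<Longrightarrow> is_mm X"
  by (auto simp: scale_pyr_def intro: is_mm_scale_mm pyramid_is_mm)

lemma scale_pyr_nonempty: "pyramid P \<Longrightarrow> scale_pyr c P \<noteq> {}"
  by (simp add: pyramid_def scale_pyr_def)

lemma pyramid_scale_mm_mem:
  assumes "pyramid P" "X \<in> P" "0 < s" "s \<le> 1"
  shows "scale_mm s X \<in> P"
  using assms is_mm_scale_mm dominated_scale_mm pyramid_is_mm unfolding pyramid_def by blast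

lemma scale_pyr_mono:
  assumes "pyramid P" "0 < s" "s \<le> u"
  shows "scale_pyr s P \<subseteq> scale_pyr u P"
proof
  fix X assume "X \<in> scale_pyr s P"
  then obtain Y where "Y \<in> P" "X = scale_mm s Y" by (auto simp: scale_pyr_def)
  then have "X = scale_mm u (scale_mm (s / u) Y)" "scale_mm (s / u) Y \<in> P"
    using assms by (auto intro: pyramid_scale_mm_mem)
  then show "X \<in> scale_pyr u P" unfolding scale_pyr_def by (rule image_eqI)
qed

lemma pyramid_expanding_imp_fixed:
  assumes P: "pyramid P" and "u > 1" and expanding: "scale_pyr u P \<subseteq> P" and "s > 0"
  shows "scale_pyr s P = P"
proof -
  have powers: "scale_pyr (u ^ n) P \<subseteq> P" for n
  proof (induction n)
    case (Suc n)
    have "scale_pyr (u ^ Suc n) P = scale_pyr u (scale_pyr (u ^ n) P)" by simp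
    also have "\<dots> \<subseteq> scale_pyr u P" using Suc.IH by (simp add: scale_pyr_def image_mono)
    finally show ?case using expanding by blast
  qed simp
  have shrinking: "scale_pyr r P \<subseteq> P" if "r > 0" for r
  proof -
    obtain n where "r < u ^ n" using real_arch_pow[OF \<open>u > 1\<close>] by blast
    then show ?thesis using scale_pyr_mono[OF P \<open>r > 0\<close>, of "u ^ n"] powers by auto
  qed
  have "P = scale_pyr s (scale_pyr (1 / s) P)" using \<open>s > 0\<close> by simp
  also have "\<dots> \<subseteq> scale_pyr s P"
    using shrinking[of "1 / s"] \<open>s > 0\<close> by (simp add: scale_pyr_def image_mono)
  finally show ?thesis using shrinking[OF \<open>s > 0\<close>] by blast
qed

lemma Pi_star_scale_pyr_not_subset:
  assumes "P \<in> Pi_star" "0 < s" "s < u"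
  shows "\<not> scale_pyr u P \<subseteq> scale_pyr s P"
proof
  assume "scale_pyr u P \<subseteq> scale_pyr s P"
  then have "scale_pyr (1 / s) (scale_pyr u P) \<subseteq> scale_pyr (1 / s) (scale_pyr s P)"
    by (simp only: scale_pyr_def image_mono)
  then have "scale_pyr (u / s) P \<subseteq> P" using assms(2) by simp
  moreover have "u / s > 1" using assms by simp
  ultimately show False
    using assms(1) pyramid_expanding_imp_fixed unfolding Pi_star_def by blast
qed

lemma liminf_pos_imp_eventually_gt:
  assumes "0 < liminf (\<lambda>n. ereal (f n))"
  obtains \<delta> where "\<delta> > 0" "\<forall>\<^sub>F n in sequentially. \<delta> < f n"
proof -
  obtain y where "0 < y" "y < liminf (\<lambda>n. ereal (f n))" using assms dense by blast
  moreover obtain r where "y = ereal r" using \<open>0 < y\<close> \<open>y < _\<close> by (cases y) auto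
  ultimately have "\<forall>z<y. \<forall>\<^sub>F n in sequentially. z < ereal (f n)"
    by (metis le_Liminf_iff less_imp_le)
  moreover have "0 < r" "ereal (r / 2) < y" using \<open>0 < y\<close> \<open>y = ereal r\<close> by simp_all
  ultimately have "\<forall>\<^sub>F n in sequentially. ereal (r / 2) < ereal (f n)" by blast
  then show thesis using that[of "r / 2"] \<open>0 < r\<close> by simp
qed

text \<open>A point of \<^term>\<open>scale_pyr c A\<close> is approximated by \<^term>\<open>scale_pyr c (As n)\<close>, hence
  frequently by \<open>Bs n\<close>; this rules out the uniform lower bound on its distance to \<open>Bs n\<close>
  that weak convergence gives for points outside \<open>B\<close>.\<close>
lemma weak_conv_scale_pyr_subset:
  assumes A: "weak_conv As A" and B: "weak_conv Bs B" and "c > 0"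
    and mm: "\<And>X. X \<in> A \<Longrightarrow> is_mm X" and nonempty: "\<And>n. As n \<noteq> {}"
    and frequently_subset: "\<exists>\<^sub>F n in sequentially. scale_pyr c (As n) \<subseteq> Bs n"
  shows "scale_pyr c A \<subseteq> B"
proof
  fix X assume "X \<in> scale_pyr c A"
  then obtain Y where "Y \<in> A" and X: "X = scale_mm c Y" by (auto simp: scale_pyr_def)
  show "X \<in> B"
  proof (rule ccontr)
    assume "X \<notin> B"
    with B have "0 < liminf (\<lambda>n. ereal (box_set X (Bs n)))"
      using is_mm_scale_mm[OF mm[OF \<open>Y \<in> A\<close>] \<open>c > 0\<close>] unfolding weak_conv_def X by blast
    then obtain \<delta> where "\<delta> > 0" and far: "\<forall>\<^sub>F n in sequentially. \<delta> < box_set X (Bs n)"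
      by (rule liminf_pos_imp_eventually_gt)
    define m where "m = max c 1"
    have "(\<lambda>n. box_set Y (As n)) \<longlonglongrightarrow> 0" using A \<open>Y \<in> A\<close> unfolding weak_conv_def by blast
    then have "\<forall>\<^sub>F n in sequentially. box_set Y (As n) < \<delta> / m"
      using \<open>\<delta> > 0\<close> by (intro order_tendstoD) (auto simp: m_def)
    then have near: "\<forall>\<^sub>F n in sequentially. box_set X (scale_pyr c (As n)) < \<delta>"
    proof eventually_elim
      case (elim n)
      have "m \<ge> 1" by (simp add: m_def)
      with elim \<open>\<delta> > 0\<close> have "max (box_set Y (As n)) (m * box_set Y (As n)) < \<delta>"
        by (smt (verit) divide_le_eq_1 pos_less_divide_eq mult.commute)
      with box_set_scale_pyr_le[OF \<open>c > 0\<close>, of Y "As n"] show ?case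
        unfolding X m_def by linarith
    qed
    have "\<forall>\<^sub>F n in sequentially. \<not> scale_pyr c (As n) \<subseteq> Bs n"
      using far near
    proof eventually_elim
      case (elim n)
      then show ?case
        using box_set_antimono[of "scale_pyr c (As n)" "Bs n" X] nonempty[of n]
        by (auto simp: scale_pyr_def)
    qed
    with frequently_subset show False by (simp add: frequently_def)
  qed
qed

lemma Pi_star_scale_pyr_eq_imp_1:
  assumes "P \<in> Pi_star" "t > 0" "scale_pyr t P = P"
  shows "t = 1"
proof (rule ccontr)
  assume "t \<noteq> 1"
  then consider "1 < t" | "t < 1" by linarith
  then show False
    using Pi_star_scale_pyr_not_subset[OF assms(1)] assms(2,3)
    by cases (metis scale_pyr_1 order.refl zero_less_one)+
qed

context
  fixes Ps :: "nat \<Rightarrow> mm set" and ts :: "nat \<Rightarrow> real" and P :: "mm set" and t :: real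
  assumes Ps: "\<And>n. Ps n \<in> Pi_star" and ts: "\<And>n. ts n > 0" and P: "P \<in> Pi_star" and "t > 0"
    and conv: "weak_conv Ps P"
    and conv_scaled: "weak_conv (\<lambda>n. scale_pyr (ts n) (Ps n)) (scale_pyr t P)"
begin

lemma scale_factor_eventually_less:
  assumes "t < b"
  shows "\<forall>\<^sub>F n in sequentially. ts n < b"
proof (rule ccontr)
  have pyr: "pyramid P" "\<And>n. pyramid (Ps n)" using P Ps by (auto simp: Pi_star_def)
  assume "\<not> ?thesis"
  then have "\<exists>\<^sub>F n in sequentially. b \<le> ts n" by (simp add: not_eventually not_less)
  then have "\<exists>\<^sub>F n in sequentially. scale_pyr b (Ps n) \<subseteq> scale_pyr (ts n) (Ps n)"
    by (rule frequently_elim1) (use assms \<open>t > 0\<close> in \<open>simp add: scale_pyr_mono pyr\<close>)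
  then have "scale_pyr b P \<subseteq> scale_pyr t P"
    using weak_conv_scale_pyr_subset[OF conv conv_scaled] pyr assms \<open>t > 0\<close>
    by (auto simp: pyramid_def)
  with Pi_star_scale_pyr_not_subset[OF P \<open>t > 0\<close> assms] show False ..
qed

lemma scale_factor_eventually_greater:
  assumes "a < t"
  shows "\<forall>\<^sub>F n in sequentially. a < ts n"
proof (cases "a > 0")
  case False
  then show ?thesis by (intro always_eventually allI) (meson le_less_trans not_less ts)
next
  case True
  have pyr: "pyramid P" "\<And>n. pyramid (Ps n)" using P Ps by (auto simp: Pi_star_def)
  show ?thesis
  proof (rule ccontr)
    assume "\<not> ?thesis"
    then have "\<exists>\<^sub>F n in sequentially. ts n \<le> a" by (simp add: not_eventually not_less)
    then have "\<exists>\<^sub>F n in sequentially. scale_pyr (1 / a) (scale_pyr (ts n) (Ps n)) \<subseteq> Ps n"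
    proof (rule frequently_elim1)
      fix n assume "ts n \<le> a"
      then have "scale_pyr (ts n / a) (Ps n) \<subseteq> scale_pyr 1 (Ps n)"
        using ts \<open>a > 0\<close> by (intro scale_pyr_mono pyr) auto
      then show "scale_pyr (1 / a) (scale_pyr (ts n) (Ps n)) \<subseteq> Ps n" by simp
    qed
    then have "scale_pyr (1 / a) (scale_pyr t P) \<subseteq> P"
      using pyr \<open>t > 0\<close> \<open>a > 0\<close>
      by (intro weak_conv_scale_pyr_subset[OF conv_scaled conv])
        (auto intro: is_mm_scale_pyr simp: scale_pyr_nonempty)
    with Pi_star_scale_pyr_not_subset[OF P, of 1 "t / a"] assms \<open>a > 0\<close> show False by simp
  qed
qed

end

theorem proposition3p11:
  shows "(\<forall>P\<in>Pi_star. \<forall>t::real. t > 0 \<longrightarrow> scale_pyr t P = P \<longrightarrow> t = 1) \<and>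
         (\<forall>(Ps :: nat \<Rightarrow> mm set) (ts :: nat \<Rightarrow> real) P t.
            (\<forall>n. Ps n \<in> Pi_star) \<longrightarrow> (\<forall>n. ts n > 0) \<longrightarrow> P \<in> Pi_star \<longrightarrow> t > 0 \<longrightarrow>
            weak_conv Ps P \<longrightarrow>
            weak_conv (\<lambda>n. scale_pyr (ts n) (Ps n)) (scale_pyr t P) \<longrightarrow>
            ts \<longlonglongrightarrow> t)"
proof (intro conjI ballI allI impI)
  fix P t assume "P \<in> Pi_star" "(t::real) > 0" "scale_pyr t P = P"
  then show "t = 1" by (rule Pi_star_scale_pyr_eq_imp_1)
next
  fix Ps :: "nat \<Rightarrow> mm set" and ts :: "nat \<Rightarrow> real" and P t
  assume "\<forall>n. Ps n \<in> Pi_star" "\<forall>n. ts n > 0" "P \<in> Pi_star" "t > 0" "weak_conv Ps P"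
    "weak_conv (\<lambda>n. scale_pyr (ts n) (Ps n)) (scale_pyr t P)"
  then show "ts \<longlonglongrightarrow> t"
    by (intro order_tendstoI scale_factor_eventually_less scale_factor_eventually_greater) auto
qed

end
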